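(* Let $\mathbb{S}\in\mathbb{Z}^{N_X\times N_e}$, $\mathcal{X}=\mathbb{R}^{N_X}_{>0}$, $\Phi$ a primal thermodynamic function on $\mathcal{X}$ with conjugate $\Phi^*$, and $\{\Psi^*_x\}_{x\in\mathcal{X}}$ a family of dissipation functions on $\mathbb{R}^{N_e}$ with conjugates $\Psi_x$. Let $j:\mathcal{X}\to\mathbb{R}^{N_e}$ be the flux of a generalized flow $\dot{x}=-\mathbb{S}j(x)$. For $x\in\mathcal{X}$ let $v(x):=-\mathbb{S}j(x)$, let $j^\dagger(x,v(x))$ be the unique minimizer of $\Psi_x$ over $\{j'\in\mathbb{R}^{N_e}:-\mathbb{S}j'=v(x)\}$, let $u_{eq}(x)\in\mathbb{R}^{N_X}$ be any vector with $-\mathbb{S}^Tu_{eq}(x)=\nabla\Psi_x(j^\dagger(x,v(x)))$ (i.e. a representative of $\partial\tilde{\Psi}_x[v(x)]$, with $\tilde{\Psi}_x(v):=\min_{-\mathbb{S}j'=v}\Psi_x(j')$), and define the effective equilibrium flux $j_{eq}(x):=\nabla\Psi^*_x(-\mathbb{S}^Tu_{eq}(x))$. Then $-\mathbb{S}j_{eq}(x)=-\mathbb{S}j(x)$ for all $x$, i.e. $j_{eq}$ induces the same velocity as $j$. Furthermore, for a trajectory $\{x_t\}$ of $\dot x=-\mathbb{S}j(x)$, define $$\tilde{x}_t:=\nabla\Phi^*\big(\nabla\Phi(x_t)+u_{eq}(x_t)\big),\qquad j_{eq}(t,x):=\nabla\Psi^*_x\Big(\mathbb{S}^T\nabla_x\mathcal{D}_\Phi[x\|\tilde{x}_t]\Big).$$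 Then the time-dependent equilibrium flux $j_{eq}(t,x)$ generates the same trajectory: $\dot{x}_t=-\mathbb{S}j_{eq}(t,x_t)$ for all $t$.
   Context: A primal thermodynamic function is a strictly convex differentiable $\Phi:\mathcal{X}\to\mathbb{R}$ such that $\{\nabla\Phi(x):x\in\mathcal{X}\}=\mathbb{R}^{N_X}$ and, for every $x_{in}\in\mathcal{X}$ and $x_{bd}\in\mathbb{R}^{N_X}_{\ge0}\setminus\mathcal{X}$, $\lim_{\lambda\to0^+}\frac{d}{d\lambda}\Phi(\lambda x_{in}+(1-\lambda)x_{bd})=-\infty$; $\Phi^*(y)=\max_{x\in\mathcal{X}}[\langle x,y\rangle-\Phi(x)]$, and $\nabla\Phi,\nabla\Phi^*$ are mutually inverse bijections between $\mathcal{X}$ and $\mathbb{R}^{N_X}$. The Bregman divergence is $\mathcal{D}_\Phi[x\|x']=\Phi(x)-\Phi(x')-\langle x-x',\nabla\Phi(x')\rangle$. A dissipation function on $\mathbb{R}^{N_e}$ is a strictly convex, continuously differentiable, $1$-coercive, even function $\psi$ with $\psi(0)=0$; $\Psi_x$ is the Legendre–Fenchel conjugate of $\Psi^*_x$, and $\nabla\Psi_x,\nabla\Psi^*_x$ are mutually inverse bijections. *)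

theory Defs
  imports "HOL-Analysis.Analysis"
begin

definition grad :: "('a::euclidean_space \<Rightarrow> real) \<Rightarrow> 'a \<Rightarrow> 'a" where
  "grad f x = (THE g. (f has_derivative (\<lambda>h. g \<bullet> h)) (at x))"

definition strictly_convex_on :: "'a::real_vector set \<Rightarrow> ('a \<Rightarrow> real) \<Rightarrow> bool" where
  "strictly_convex_on S f \<longleftrightarrow> convex S \<and>
    (\<forall>x\<in>S. \<forall>y\<in>S. \<forall>t. x \<noteq> y \<and> 0 < t \<and> t < 1 \<longrightarrow>
       f ((1 - t) *\<^sub>R x + t *\<^sub>R y) < (1 - t) * f x + t * f y)"

definition pos_orthant :: "(real ^ 'n) set" where
  "pos_orthant = {x. \<forall>i. 0 < x $ i}"

definition nonneg_orthant :: "(real ^ 'n) set" where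
  "nonneg_orthant = {x. \<forall>i. 0 \<le> x $ i}"

definition conj :: "'a::real_inner set \<Rightarrow> ('a \<Rightarrow> real) \<Rightarrow> 'a \<Rightarrow> real" where
  "conj S f y = (SUP x\<in>S. x \<bullet> y - f x)"

definition primal_thermo :: "(real ^ 'n) set \<Rightarrow> (real ^ 'n \<Rightarrow> real) \<Rightarrow> bool" where
  "primal_thermo X \<Phi> \<longleftrightarrow>
     strictly_convex_on X \<Phi> \<and>
     (\<forall>x\<in>X. \<Phi> differentiable (at x)) \<and>
     grad \<Phi> ` X = UNIV \<and>
     (\<forall>xin\<in>X. \<forall>xbd\<in>nonneg_orthant - X.
        filterlim (\<lambda>l. deriv (\<lambda>m. \<Phi> (m *\<^sub>R xin + (1 - m) *\<^sub>R xbd)) l) at_bot (at_right 0))"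

definition dissipation_fun :: "(real ^ 'e \<Rightarrow> real) \<Rightarrow> bool" where
  "dissipation_fun \<psi> \<longleftrightarrow>
     strictly_convex_on UNIV \<psi> \<and>
     (\<forall>\<xi>. \<psi> differentiable (at \<xi>)) \<and> continuous_on UNIV (grad \<psi>) \<and>
     filterlim (\<lambda>\<xi>. \<psi> \<xi> / norm \<xi>) at_top at_infinity \<and>
     (\<forall>\<xi>. \<psi> (- \<xi>) = \<psi> \<xi>) \<and> \<psi> 0 = 0"

definition bregman :: "(real ^ 'n \<Rightarrow> real) \<Rightarrow> real ^ 'n \<Rightarrow> real ^ 'n \<Rightarrow> real" where
  "bregman \<Phi> x x' = \<Phi> x - \<Phi> x' - (x - x') \<bullet> grad \<Phi> x'"

end

theory Submission
  imports Defs
begin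

text \<open>Since \<open>\<nabla>\<Psi>\<^sup>*\<^sub>x\<close> inverts \<open>\<nabla>\<Psi>\<^sub>x\<close>, the effective equilibrium flux
  \<open>\<nabla>\<Psi>\<^sup>*\<^sub>x(-S\<^sup>T u\<^sub>e\<^sub>q(x))\<close> is just the constrained minimiser \<open>j\<^sup>\<dagger>(x, v(x))\<close>, which
  has the same image under \<open>S\<close> as \<open>j(x)\<close>. For the time-dependent flux, the gradient of
  \<open>D\<^sub>\<Phi>[x \<parallel> x']\<close> in \<open>x\<close> is \<open>\<nabla>\<Phi>(x) - \<nabla>\<Phi>(x')\<close>, and the reference point \<open>x'\<close>
  is chosen as the mirror point with \<open>\<nabla>\<Phi>(x') = \<nabla>\<Phi>(x\<^sub>t) + u\<^sub>e\<^sub>q(x\<^sub>t)\<close>; so at \<open>x = x\<^sub>t\<close> the argument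
  of \<open>\<nabla>\<Psi>\<^sup>*\<close> is again \<open>-S\<^sup>T u\<^sub>e\<^sub>q(x\<^sub>t)\<close> and both fluxes agree along the trajectory.\<close>

lemma grad_eqI:
  fixes f :: "'a::euclidean_space \<Rightarrow> real"
  assumes "(f has_derivative (\<lambda>h. g \<bullet> h)) (at x)"
  shows "grad f x = g"
  unfolding grad_def
proof (rule the_equality)
  show "(f has_derivative (\<lambda>h. g \<bullet> h)) (at x)" by fact
  fix g' assume "(f has_derivative (\<lambda>h. g' \<bullet> h)) (at x)"
  with assms have "(\<lambda>h. g' \<bullet> h) = (\<lambda>h. g \<bullet> h)"
    using has_derivative_unique by blast
  then have "\<And>h. (g' - g) \<bullet> h = 0" by (metis inner_diff_left right_minus_eq)
  then show "g' = g" by (metis inner_eq_zero_iff right_minus_eq)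
qed

lemma has_derivative_grad:
  fixes f :: "'a::euclidean_space \<Rightarrow> real"
  assumes "f differentiable (at x)"
  shows "(f has_derivative (\<lambda>h. grad f x \<bullet> h)) (at x)"
proof -
  obtain f' where f': "(f has_derivative f') (at x)"
    using assms differentiable_def by blast
  have "f' = (\<lambda>h. adjoint f' 1 \<bullet> h)"
    using adjoint_works[OF has_derivative_linear[OF f'], of _ 1]
    by (auto simp: fun_eq_iff inner_commute)
  with f' have "(f has_derivative (\<lambda>h. adjoint f' 1 \<bullet> h)) (at x)" by simp
  with grad_eqI[OF this] show ?thesis by simp
qed

lemma grad_bregman_left:
  assumes "\<Phi> differentiable (at x)"
  shows "grad (\<lambda>y. bregman \<Phi> y z) x = grad \<Phi> x - grad \<Phi> z"
proof (rule grad_eqI)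
  have "((\<lambda>y. \<Phi> y - \<Phi> z - (y - z) \<bullet> grad \<Phi> z) has_derivative
        (\<lambda>h. grad \<Phi> x \<bullet> h - 0 - (h - 0) \<bullet> grad \<Phi> z)) (at x)"
    by (intro derivative_intros has_derivative_grad assms)
  then show "((\<lambda>y. bregman \<Phi> y z) has_derivative (\<lambda>h. (grad \<Phi> x - grad \<Phi> z) \<bullet> h)) (at x)"
    unfolding bregman_def by (simp add: inner_diff_left inner_diff_right inner_commute)
qed

lemma grad_bregman_mirror_point:
  assumes "\<Phi> differentiable (at x)" and "grad \<Phi> z = grad \<Phi> x + u"
  shows "grad (\<lambda>y. bregman \<Phi> y z) x = - u"
  using assms by (simp add: grad_bregman_left)

lemma equilibrium_flux_velocity:
  fixes S :: "real ^ 'e ^ 'n"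
  assumes inverse: "\<And>w. grad \<psi> (grad \<psi>\<^sub>c w) = w"
    and potential: "- (transpose S *v u) = grad \<psi>\<^sub>c j\<^sub>d"
    and constraint: "S *v j\<^sub>d = S *v j"
  shows "S *v grad \<psi> (- (transpose S *v u)) = S *v j"
proof -
  have "grad \<psi> (- (transpose S *v u)) = j\<^sub>d" by (simp only: potential inverse)
  with constraint show ?thesis by simp
qed

lemma bregman_equilibrium_flux_velocity:
  fixes S :: "real ^ 'e ^ 'n"
  assumes "\<Phi> differentiable (at x)" and "grad \<Phi> z = grad \<Phi> x + u"
  shows "S *v grad \<psi> (transpose S *v grad (\<lambda>y. bregman \<Phi> y z) x)
       = S *v grad \<psi> (- (transpose S *v u))"
  using grad_bregman_mirror_point[OF assms] by (simp add: linear_neg[OF matrix_vector_mul_linear])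

theorem mainTheorem10:
  fixes S :: "real ^ 'e ^ 'n"
    and \<Phi> :: "real ^ 'n \<Rightarrow> real"
    and \<Psi>s :: "real ^ 'n \<Rightarrow> real ^ 'e \<Rightarrow> real"
    and j :: "real ^ 'n \<Rightarrow> real ^ 'e"
    and jdag :: "real ^ 'n \<Rightarrow> real ^ 'e"
    and ueq :: "real ^ 'n \<Rightarrow> real ^ 'n"
    and xt :: "real \<Rightarrow> real ^ 'n"
    and I :: "real set"
  assumes S_int: "\<forall>i k. S $ i $ k \<in> \<int>"
    and Phi: "primal_thermo pos_orthant \<Phi>"
    and Phis_diff: "\<forall>y. conj pos_orthant \<Phi> differentiable (at y)"
    and Phi_inv1: "\<forall>x\<in>pos_orthant. grad (conj pos_orthant \<Phi>) (grad \<Phi> x) = x"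
    and Phi_inv2: "\<forall>y. grad (conj pos_orthant \<Phi>) y \<in> pos_orthant \<and>
                       grad \<Phi> (grad (conj pos_orthant \<Phi>) y) = y"
    and Psis: "\<forall>x\<in>pos_orthant. dissipation_fun (\<Psi>s x)"
    and Psi_diff: "\<forall>x\<in>pos_orthant. \<forall>w. conj UNIV (\<Psi>s x) differentiable (at w)"
    and Psi_inv1: "\<forall>x\<in>pos_orthant. \<forall>w. grad (\<Psi>s x) (grad (conj UNIV (\<Psi>s x)) w) = w"
    and Psi_inv2: "\<forall>x\<in>pos_orthant. \<forall>\<xi>. grad (conj UNIV (\<Psi>s x)) (grad (\<Psi>s x) \<xi>) = \<xi>"
    and jdag_min: "\<forall>x\<in>pos_orthant. - (S *v jdag x) = - (S *v j x) \<and>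
                     (\<forall>j'. - (S *v j') = - (S *v j x) \<longrightarrow>
                        conj UNIV (\<Psi>s x) (jdag x) \<le> conj UNIV (\<Psi>s x) j')"
    and ueq: "\<forall>x\<in>pos_orthant.
                - (transpose S *v ueq x) = grad (conj UNIV (\<Psi>s x)) (jdag x)"
    and I: "is_interval I"
    and traj_pos: "\<forall>t\<in>I. xt t \<in> pos_orthant"
    and traj: "\<forall>t\<in>I. (xt has_vector_derivative - (S *v j (xt t))) (at t within I)"
  shows "(\<forall>x\<in>pos_orthant.
            - (S *v grad (\<Psi>s x) (- (transpose S *v ueq x))) = - (S *v j x))
       \<and> (\<forall>t\<in>I.
            (xt has_vector_derivative
               - (S *v (let xtil = grad (conj pos_orthant \<Phi>) (grad \<Phi> (xt t) + ueq (xt t))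
                        in grad (\<Psi>s (xt t))
                             (transpose S *v grad (\<lambda>y. bregman \<Phi> y xtil) (xt t)))))
              (at t within I))"
proof -
  have effective: "S *v grad (\<Psi>s x) (- (transpose S *v ueq x)) = S *v j x"
    if "x \<in> pos_orthant" for x
    by (rule equilibrium_flux_velocity[where \<psi>\<^sub>c = "conj UNIV (\<Psi>s x)" and j\<^sub>d = "jdag x"])
      (use that Psi_inv1 ueq jdag_min in auto)
  have time_dependent:
    "S *v grad (\<Psi>s x) (transpose S *v grad (\<lambda>y. bregman \<Phi> y
        (grad (conj pos_orthant \<Phi>) (grad \<Phi> x + ueq x))) x) = S *v j x"
    if x: "x \<in> pos_orthant" for x
  proof -
    have "\<Phi> differentiable (at x)" using Phi x unfolding primal_thermo_def by blast
    then have "S *v grad (\<Psi>s x) (transpose S *v grad (\<lambda>y. bregman \<Phi> y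
        (grad (conj pos_orthant \<Phi>) (grad \<Phi> x + ueq x))) x)
      = S *v grad (\<Psi>s x) (- (transpose S *v ueq x))"
      using Phi_inv2 by (intro bregman_equilibrium_flux_velocity) auto
    also have "\<dots> = S *v j x" using effective[OF x] .
    finally show ?thesis .
  qed
  show ?thesis using effective time_dependent traj_pos traj by (simp add: Let_def)
qed

end
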